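(* Let $\nu(\mathbb{R}^d\setminus\{0\})<\infty$ and assume (B) and (C) below hold with some $E\subset\mathbb{S}^{d-1}$ and $\kappa\ge0$. Then there exists $C_{17}>0$ such that $$\int_{\mathbb{R}^d}e^{\kappa(\theta\cdot z)}\nu^{n*}(z)\,dz\le(C_0/C_1)\big(C_{17}\Psi(\infty)\big)^n,\quad\theta\in E,\ n\in\mathbb{N},$$ and $\lim_{R\to\infty}\sup_{\theta\in E}\int_{|z|>R}e^{\kappa(\theta\cdot z)}\nu^{n*}(z)\,dz=0$ for every $n\in\mathbb{N}$.
   Context: Let $d\ge1$ and $\nu$ a Lévy measure on $\mathbb{R}^d\setminus\{0\}$. $\Phi(\xi)=\int\big(1-e^{i\xi\cdot y}+i\xi\cdot y\,\mathbf 1_{B(0,1)}(y)\big)\nu(dy)$, $\Psi(r)=\sup_{|\xi|\le r}\mathrm{Re}\,\Phi(\xi)$, $\Psi(\infty)=\lim_{r\to\infty}\Psi(r)$. $\nu^{n*}$ is the density of the $n$-fold convolution of $\nu$. $\Gamma_E=\{y\ne0:y/|y|\in E\}$. (B) $\nu(dx)=\nu(x)dx$; there are nonincreasing $f:(0,\infty)\to(0,\infty)$ and $C_0>0$ with $\nu(x)\le C_0f(|x|)$, $\liminf_{r\to0^+}\frac{\nu(\{|x|>r\})}{f(r)r^d}>0$, and $K(r):=\sup_{|x|>1}\frac{1}{f(|x|)}\int_{|x-y|>r,|y|>r}f(|x-y|)f(|y|)dy$ decreases to $0$ as $r\to\infty$. (C) $\lim_{r\to\infty}\nu(r\theta-y)/\nu(r\theta)=e^{\kappa(\theta\cdot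 y)}$ for all $y\in\mathbb{R}^d$, $\theta\in E$, and $C_1:=\inf_{x\in\Gamma_E}\nu(x)/f(|x|)>0$. *)

theory Defs
  imports "HOL-Analysis.Analysis"
begin

text \<open>Density of the n-fold convolution of the measure nu(x) dx (n >= 1).
  The value at n = 0 is a dummy and is never used.\<close>
fun conv_pow :: "('a::euclidean_space \<Rightarrow> real) \<Rightarrow> nat \<Rightarrow> 'a \<Rightarrow> ennreal" where
  "conv_pow nu 0 = (\<lambda>z. 0)"
| "conv_pow nu (Suc 0) = (\<lambda>z. ennreal (nu z))"
| "conv_pow nu (Suc (Suc n)) =
     (\<lambda>z. \<integral>\<^sup>+ y. ennreal (nu (z - y)) * conv_pow nu (Suc n) y \<partial>lborel)"

definition Phi :: "('a::euclidean_space \<Rightarrow> real) \<Rightarrow> 'a \<Rightarrow> complex" where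
  "Phi nu \<xi> = integral\<^sup>L lborel (\<lambda>y.
      (1 - exp (\<i> * complex_of_real (\<xi> \<bullet> y))
         + \<i> * complex_of_real (\<xi> \<bullet> y) * complex_of_real (indicator (ball 0 1) y))
      * complex_of_real (nu y))"

definition Psi :: "('a::euclidean_space \<Rightarrow> real) \<Rightarrow> real \<Rightarrow> real" where
  "Psi nu r = Sup {Re (Phi nu \<xi>) | \<xi>. norm \<xi> \<le> r}"

definition Psi_inf :: "('a::euclidean_space \<Rightarrow> real) \<Rightarrow> real" where
  "Psi_inf nu = Lim at_top (Psi nu)"

definition Gamma_cone :: "'a::euclidean_space set \<Rightarrow> 'a set" where
  "Gamma_cone E = {y. y \<noteq> 0 \<and> scaleR (1 / norm y) y \<in> E}"

definition K_fun :: "'a::euclidean_space itself \<Rightarrow> (real \<Rightarrow> real) \<Rightarrow> real \<Rightarrow> ennreal" where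
  "K_fun TYPE('a) f r = (SUP x\<in>{x::'a. norm x > 1}.
      ennreal (1 / f (norm x)) *
      (\<integral>\<^sup>+ y. indicator {y. norm (x - y) > r \<and> norm y > r} y
               * ennreal (f (norm (x - y)) * f (norm y)) \<partial>(lborel :: 'a measure)))"

end

theory Submission
  imports Defs
begin

text \<open>By Fubini and translation invariance the exponential moments of convolution powers factor:
  \<open>\<integral> exp (\<kappa> \<theta> \<bullet> z) \<nu>\<^sup>n\<^sup>*(z) dz = (\<integral> exp (\<kappa> \<theta> \<bullet> y) \<nu>(y) dy)\<^sup>n\<close>, so it suffices to bound the
  first moment uniformly in \<open>\<theta> \<in> E\<close>. On \<open>|y| \<le> r\<close> the weight is at most \<open>exp (\<kappa> r)\<close>. On
  \<open>|y| > r\<close> condition (C) writes \<open>exp (\<kappa> \<theta> \<bullet> y) \<nu>(y)\<close> as the limit of \<open>\<nu>(m\<theta> - y) \<nu>(y) / \<nu>(m\<theta>)\<close>;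
  by Fatou, \<open>\<nu> \<le> C\<^sub>0 f\<close> and \<open>\<nu>(m\<theta>) \<ge> C\<^sub>1 f(m)\<close>, this part is at most \<open>(C\<^sub>0\<^sup>2/C\<^sub>1) K(r)\<close>,
  which is finite for large \<open>r\<close>. The tails of \<open>\<nu>\<^sup>n\<^sup>*\<close> vanish by induction on \<open>n\<close>, because
  \<open>|w + y| > R\<close> forces \<open>|w| > R/2\<close> or \<open>|y| > R/2\<close>. Finally \<open>\<Psi>(\<infinity>) \<ge> Re \<Phi>(b) > 0\<close> unless
  \<open>\<nu> = 0\<close> a.e., so the geometric bound can be absorbed into \<open>(C\<^sub>0/C\<^sub>1) (C\<^sub>1\<^sub>7 \<Psi>(\<infinity>))\<^sup>n\<close>.\<close>

lemma borel_measurable_conv_pow: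
  assumes [measurable]: "nu \<in> borel_measurable lborel"
  shows "conv_pow nu n \<in> borel_measurable lborel"
proof -
  have "conv_pow nu (Suc m) \<in> borel_measurable lborel" for m
  proof (induction m)
    case (Suc m)
    then have [measurable]: "conv_pow nu (Suc m) \<in> borel_measurable lborel" .
    have "(\<lambda>(z, y). ennreal (nu (z - y)) * conv_pow nu (Suc m) y)
            \<in> borel_measurable (lborel \<Otimes>\<^sub>M lborel)"
      by measurable
    then show ?case
      by (simp add: lborel.borel_measurable_nn_integral)
  qed simp
  then show ?thesis
    by (cases n) simp_all
qed

lemma nn_integral_lborel_translate:
  fixes h :: "'a::euclidean_space \<Rightarrow> ennreal"
  assumes [measurable]: "h \<in> borel_measurable borel"
  shows "(\<integral>\<^sup>+ z. h z \<partial>lborel) = (\<integral>\<^sup>+ w. h (w + y) \<partial>lborel)"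
proof -
  have "(\<integral>\<^sup>+ z. h z \<partial>lborel) = (\<integral>\<^sup>+ z. h z \<partial>distr lborel borel ((+) y))"
    by (simp add: lborel_distr_plus)
  also have "\<dots> = (\<integral>\<^sup>+ w. h (w + y) \<partial>lborel)"
    by (subst nn_integral_distr) (auto simp: add.commute)
  finally show ?thesis .
qed

lemma nn_integral_conv_pow_Suc_Suc:
  fixes nu :: "'a::euclidean_space \<Rightarrow> real" and g :: "'a \<Rightarrow> ennreal"
  assumes [measurable]: "nu \<in> borel_measurable lborel" "g \<in> borel_measurable lborel"
  shows "(\<integral>\<^sup>+ z. g z * conv_pow nu (Suc (Suc n)) z \<partial>lborel)
       = (\<integral>\<^sup>+ y. conv_pow nu (Suc n) y * (\<integral>\<^sup>+ w. g (w + y) * ennreal (nu w) \<partial>lborel) \<partial>lborel)"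
proof -
  note [measurable] = borel_measurable_conv_pow[OF assms(1)]
  have "(\<integral>\<^sup>+ z. g z * conv_pow nu (Suc (Suc n)) z \<partial>lborel)
      = (\<integral>\<^sup>+ z. (\<integral>\<^sup>+ y. g z * ennreal (nu (z - y)) * conv_pow nu (Suc n) y \<partial>lborel) \<partial>lborel)"
    by (intro nn_integral_cong) (simp add: nn_integral_cmult mult.assoc)
  also have "\<dots> = (\<integral>\<^sup>+ y. (\<integral>\<^sup>+ z. g z * ennreal (nu (z - y)) * conv_pow nu (Suc n) y \<partial>lborel) \<partial>lborel)"
    by (rule lborel_pair.Fubini'[symmetric]) measurable
  also have "\<dots> = (\<integral>\<^sup>+ y. conv_pow nu (Suc n) y * (\<integral>\<^sup>+ z. g z * ennreal (nu (z - y)) \<partial>lborel) \<partial>lborel)"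
    by (intro nn_integral_cong, subst nn_integral_cmult[symmetric]) (auto simp: mult_ac)
  also have "\<dots> = (\<integral>\<^sup>+ y. conv_pow nu (Suc n) y * (\<integral>\<^sup>+ w. g (w + y) * ennreal (nu w) \<partial>lborel) \<partial>lborel)"
  proof -
    have "(\<integral>\<^sup>+ z. g z * ennreal (nu (z - y)) \<partial>lborel)
        = (\<integral>\<^sup>+ w. g (w + y) * ennreal (nu w) \<partial>lborel)" for y
      by (subst nn_integral_lborel_translate[where y = y]) auto
    then show ?thesis by simp
  qed
  finally show ?thesis .
qed

definition exp_moment :: "('a::euclidean_space \<Rightarrow> real) \<Rightarrow> real \<Rightarrow> 'a \<Rightarrow> nat \<Rightarrow> ennreal" where
  "exp_moment nu \<kappa> \<theta> n = (\<integral>\<^sup>+ z. ennreal (exp (\<kappa> * (\<theta> \<bullet> z))) * conv_pow nu n z \<partial>lborel)"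

definition exp_tail :: "('a::euclidean_space \<Rightarrow> real) \<Rightarrow> real \<Rightarrow> 'a \<Rightarrow> nat \<Rightarrow> real \<Rightarrow> ennreal" where
  "exp_tail nu \<kappa> \<theta> n R =
     (\<integral>\<^sup>+ z\<in>{z. norm z > R}. ennreal (exp (\<kappa> * (\<theta> \<bullet> z))) * conv_pow nu n z \<partial>lborel)"

lemma nn_integral_exp_inner_translate:
  assumes [measurable]: "g \<in> borel_measurable borel"
  shows "(\<integral>\<^sup>+ w. ennreal (exp (\<kappa> * (\<theta> \<bullet> (w + y)))) * g w \<partial>lborel)
       = ennreal (exp (\<kappa> * (\<theta> \<bullet> y))) * (\<integral>\<^sup>+ w. ennreal (exp (\<kappa> * (\<theta> \<bullet> w))) * g w \<partial>lborel)"
proof -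
  have "ennreal (exp (\<kappa> * (\<theta> \<bullet> (w + y))))
      = ennreal (exp (\<kappa> * (\<theta> \<bullet> y))) * ennreal (exp (\<kappa> * (\<theta> \<bullet> w)))" for w
    by (simp add: inner_add_right distrib_left exp_add ennreal_mult mult.commute)
  then show ?thesis
    by (simp add: nn_integral_cmult mult.assoc)
qed

lemma exp_moment_Suc_Suc:
  assumes [measurable]: "nu \<in> borel_measurable lborel"
  shows "exp_moment nu \<kappa> \<theta> (Suc (Suc n)) = exp_moment nu \<kappa> \<theta> 1 * exp_moment nu \<kappa> \<theta> (Suc n)"
proof -
  note [measurable] = borel_measurable_conv_pow[OF assms]
  let ?e = "\<lambda>z. ennreal (exp (\<kappa> * (\<theta> \<bullet> z)))"
  have "exp_moment nu \<kappa> \<theta> (Suc (Suc n))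
      = (\<integral>\<^sup>+ y. conv_pow nu (Suc n) y * (\<integral>\<^sup>+ w. ?e (w + y) * ennreal (nu w) \<partial>lborel) \<partial>lborel)"
    unfolding exp_moment_def by (rule nn_integral_conv_pow_Suc_Suc) auto
  also have "\<dots> = (\<integral>\<^sup>+ y. exp_moment nu \<kappa> \<theta> 1 * (?e y * conv_pow nu (Suc n) y) \<partial>lborel)"
  proof -
    have "(\<integral>\<^sup>+ w. ?e (w + y) * ennreal (nu w) \<partial>lborel) = ?e y * exp_moment nu \<kappa> \<theta> 1" for y
      by (subst nn_integral_exp_inner_translate) (auto simp: exp_moment_def)
    then show ?thesis by (simp add: mult_ac)
  qed
  also have "\<dots> = exp_moment nu \<kappa> \<theta> 1 * exp_moment nu \<kappa> \<theta> (Suc n)"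
    by (simp add: nn_integral_cmult exp_moment_def)
  finally show ?thesis .
qed

lemma exp_moment_conv_pow:
  assumes "nu \<in> borel_measurable lborel"
  shows "exp_moment nu \<kappa> \<theta> (Suc n) = exp_moment nu \<kappa> \<theta> 1 ^ Suc n"
  by (induction n) (simp_all add: exp_moment_Suc_Suc[OF assms])

lemma exp_tail_Suc_Suc_le:
  assumes [measurable]: "nu \<in> borel_measurable lborel"
  shows "exp_tail nu \<kappa> \<theta> (Suc (Suc n)) R
    \<le> exp_moment nu \<kappa> \<theta> (Suc n) * exp_tail nu \<kappa> \<theta> 1 (R/2)
      + exp_moment nu \<kappa> \<theta> 1 * exp_tail nu \<kappa> \<theta> (Suc n) (R/2)"
proof -
  note [measurable] = borel_measurable_conv_pow[OF assms]
  let ?e = "\<lambda>z. ennreal (exp (\<kappa> * (\<theta> \<bullet> z)))"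
  let ?I = "\<lambda>r z. indicator {z::'a. norm z > r} z :: ennreal"
  have tail_split: "?I R (w + y) \<le> ?I (R/2) w + ?I (R/2) y" for w y
    using norm_triangle_ineq[of w y] by (auto simp: indicator_def)
  have inner: "(\<integral>\<^sup>+ w. ?e (w + y) * (?I R (w + y) * ennreal (nu w)) \<partial>lborel)
      \<le> ?e y * (exp_tail nu \<kappa> \<theta> 1 (R/2) + ?I (R/2) y * exp_moment nu \<kappa> \<theta> 1)" for y
  proof -
    have "(\<integral>\<^sup>+ w. ?e (w + y) * (?I R (w + y) * ennreal (nu w)) \<partial>lborel)
        \<le> (\<integral>\<^sup>+ w. ?e (w + y) * (?I (R/2) w * ennreal (nu w))
                  + ?I (R/2) y * (?e (w + y) * ennreal (nu w)) \<partial>lborel)"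
      by (intro nn_integral_mono order.trans[OF mult_left_mono[OF mult_right_mono[OF tail_split]]])
        (auto simp: distrib_left distrib_right mult_ac)
    also have "\<dots> = (\<integral>\<^sup>+ w. ?e (w + y) * (?I (R/2) w * ennreal (nu w)) \<partial>lborel)
        + ?I (R/2) y * (\<integral>\<^sup>+ w. ?e (w + y) * ennreal (nu w) \<partial>lborel)"
      by (simp add: nn_integral_add nn_integral_cmult)
    also have "\<dots> = ?e y * (exp_tail nu \<kappa> \<theta> 1 (R/2) + ?I (R/2) y * exp_moment nu \<kappa> \<theta> 1)"
      by (subst (1 2) nn_integral_exp_inner_translate)
        (auto simp: exp_tail_def exp_moment_def distrib_left mult_ac)
    finally show ?thesis .
  qed
  have "exp_tail nu \<kappa> \<theta> (Suc (Suc n)) R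
      = (\<integral>\<^sup>+ y. conv_pow nu (Suc n) y
               * (\<integral>\<^sup>+ w. ?e (w + y) * (?I R (w + y) * ennreal (nu w)) \<partial>lborel) \<partial>lborel)"
    unfolding exp_tail_def
    using nn_integral_conv_pow_Suc_Suc[OF assms, of "\<lambda>z. ?e z * ?I R z" n] by (simp add: mult_ac)
  also have "\<dots> \<le> (\<integral>\<^sup>+ y. ?e y * conv_pow nu (Suc n) y * exp_tail nu \<kappa> \<theta> 1 (R/2)
        + exp_moment nu \<kappa> \<theta> 1 * (?e y * conv_pow nu (Suc n) y * ?I (R/2) y) \<partial>lborel)"
    by (intro nn_integral_mono order.trans[OF mult_left_mono[OF inner]])
      (auto simp: distrib_left mult_ac)
  also have "\<dots> = exp_moment nu \<kappa> \<theta> (Suc n) * exp_tail nu \<kappa> \<theta> 1 (R/2)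
      + exp_moment nu \<kappa> \<theta> 1 * exp_tail nu \<kappa> \<theta> (Suc n) (R/2)"
    by (subst nn_integral_add) (auto simp: nn_integral_cmult nn_integral_multc exp_tail_def exp_moment_def)
  finally show ?thesis .
qed

lemma null_sets_lborel_hyperplane:
  fixes b :: "'a::euclidean_space"
  assumes "b \<noteq> 0"
  shows "{y. b \<bullet> y = c} \<in> null_sets lborel"
proof -
  have "{y. b \<bullet> y = c} \<in> null_sets lebesgue"
    using negligible_hyperplane[of b c] assms negligible_iff_null_sets by blast
  moreover have "{y. b \<bullet> y = c} \<in> sets lborel"
    by measurable
  ultimately show ?thesis
    using null_sets_completion_iff by blast
qed

lemma AE_cos_inner_neq_1:
  fixes b :: "'a::euclidean_space"
  assumes "b \<noteq> 0"
  shows "AE y in lborel. cos (b \<bullet> y) \<noteq> 1"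
proof (rule AE_I')
  show "(\<Union>k::int. {y. b \<bullet> y = real_of_int k * 2 * pi}) \<in> null_sets lborel"
    by (rule null_sets_UN') (simp_all add: null_sets_lborel_hyperplane assms)
qed (auto simp: cos_one_2pi_int)

lemma integrable_Phi_integrand:
  fixes nu :: "'a::euclidean_space \<Rightarrow> real"
  assumes nu_nonneg: "\<And>x. nu x \<ge> 0" and nu_int: "integrable lborel nu"
  shows "integrable lborel (\<lambda>y.
      (1 - exp (\<i> * complex_of_real (\<xi> \<bullet> y))
         + \<i> * complex_of_real (\<xi> \<bullet> y) * complex_of_real (indicator (ball 0 1) y))
      * complex_of_real (nu y))"
    (is "integrable lborel (\<lambda>y. ?a y * _)")
proof (rule Bochner_Integration.integrable_bound[where f = "\<lambda>y. (2 + norm \<xi>) * nu y"])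
  have [measurable]: "nu \<in> borel_measurable borel" "ball (0::'a) 1 \<in> sets borel"
    using borel_measurable_integrable[OF nu_int] by auto
  show "integrable lborel (\<lambda>y. (2 + norm \<xi>) * nu y)"
    using nu_int by simp
  show "(\<lambda>y. ?a y * complex_of_real (nu y)) \<in> borel_measurable lborel"
    by measurable
  have "norm (?a y) \<le> 2 + norm \<xi>" for y
  proof -
    have "norm (1 - exp (\<i> * complex_of_real (\<xi> \<bullet> y))) \<le> 2"
      using norm_triangle_ineq4[of 1 "exp (\<i> * complex_of_real (\<xi> \<bullet> y))"]
      by (simp add: norm_exp_i_times)
    moreover have "norm (\<i> * complex_of_real (\<xi> \<bullet> y) * complex_of_real (indicator (ball 0 1) y))
        \<le> norm \<xi>"
    proof (cases "y \<in> ball 0 1")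
      case True
      then show ?thesis
        using Cauchy_Schwarz_ineq2[of \<xi> y] mult_left_le[of "norm y" "norm \<xi>"]
        by (simp add: norm_mult)
    qed simp
    ultimately show ?thesis
      using norm_triangle_ineq[of "1 - exp (\<i> * complex_of_real (\<xi> \<bullet> y))"
          "\<i> * complex_of_real (\<xi> \<bullet> y) * complex_of_real (indicator (ball 0 1) y)"]
      by linarith
  qed
  then show "AE y in lborel. norm (?a y * complex_of_real (nu y)) \<le> norm ((2 + norm \<xi>) * nu y)"
    using nu_nonneg by (intro AE_I2) (simp add: norm_mult mult_right_mono)
qed

lemma Re_Phi_eq_integral:
  fixes nu :: "'a::euclidean_space \<Rightarrow> real"
  assumes "\<And>x. nu x \<ge> 0" "integrable lborel nu"
  shows "Re (Phi nu \<xi>) = (\<integral>y. (1 - cos (\<xi> \<bullet> y)) * nu y \<partial>lborel)"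
  unfolding Phi_def
  by (simp add: integral_Re[OF integrable_Phi_integrand[OF assms], symmetric] Re_exp)

lemma integrable_one_minus_cos_mult:
  fixes nu :: "'a::euclidean_space \<Rightarrow> real"
  assumes "\<And>x. nu x \<ge> 0" "integrable lborel nu"
  shows "integrable lborel (\<lambda>y. (1 - cos (\<xi> \<bullet> y)) * nu y)"
  using integrable_Re[OF integrable_Phi_integrand[OF assms, of \<xi>]] by (simp add: Re_exp)

lemma Re_Phi_le_Psi_inf:
  fixes nu :: "'a::euclidean_space \<Rightarrow> real"
  assumes nu_nonneg: "\<And>x. nu x \<ge> 0" and nu_int: "integrable lborel nu"
  shows "Re (Phi nu \<xi>) \<le> Psi_inf nu"
proof -
  define S where "S = range (\<lambda>\<xi>. Re (Phi nu \<xi>))"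
  have S_bdd: "bdd_above S"
    unfolding S_def
  proof (rule bdd_aboveI2)
    fix \<xi> :: 'a
    have "(\<integral>y. (1 - cos (\<xi> \<bullet> y)) * nu y \<partial>lborel) \<le> (\<integral>y. 2 * nu y \<partial>lborel)"
      using nu_nonneg nu_int cos_ge_minus_one
      by (intro integral_mono integrable_one_minus_cos_mult mult_right_mono) auto
    then show "Re (Phi nu \<xi>) \<le> 2 * integral\<^sup>L lborel nu"
      by (simp add: Re_Phi_eq_integral[OF assms])
  qed
  have Psi_le: "Psi nu r \<le> Sup S" if "r \<ge> 0" for r
    unfolding Psi_def using that
    by (intro cSup_subset_mono[OF _ S_bdd]) (auto simp: S_def intro!: exI[of _ 0])
  have le_Psi: "Re (Phi nu \<xi>) \<le> Psi nu r" if "norm \<xi> \<le> r" for \<xi> r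
    unfolding Psi_def using that
    by (intro cSup_upper bdd_above_mono[OF S_bdd]) (auto simp: S_def)
  have "(Psi nu \<longlongrightarrow> Sup S) at_top"
  proof (rule increasing_tendsto)
    show "eventually (\<lambda>r. Psi nu r \<le> Sup S) at_top"
      using eventually_ge_at_top[of 0] by eventually_elim (rule Psi_le)
    fix x assume "x < Sup S"
    then obtain \<xi> where "x < Re (Phi nu \<xi>)"
      using less_cSup_iff[OF _ S_bdd] by (auto simp: S_def)
    then have "x < Psi nu r" if "norm \<xi> \<le> r" for r
      using le_Psi[OF that] by linarith
    then show "eventually (\<lambda>r. x < Psi nu r) at_top"
      by (rule eventually_mono[OF eventually_ge_at_top[of "norm \<xi>"]])
  qed
  then have "Psi_inf nu = Sup S"
    unfolding Psi_inf_def by (rule tendsto_Lim[rotated]) simp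
  then show ?thesis
    using cSup_upper[OF _ S_bdd] by (simp add: S_def)
qed

lemma AE_eq_0_if_Psi_inf_nonpos:
  fixes nu :: "'a::euclidean_space \<Rightarrow> real"
  assumes nu_nonneg: "\<And>x. nu x \<ge> 0" and nu_int: "integrable lborel nu"
    and "Psi_inf nu \<le> 0"
  shows "AE y in lborel. nu y = 0"
proof -
  obtain b :: 'a where "b \<in> Basis"
    using nonempty_Basis by blast
  then have "b \<noteq> 0" by auto
  have nonneg: "AE y in lborel. 0 \<le> (1 - cos (b \<bullet> y)) * nu y"
    using nu_nonneg by (intro AE_I2 mult_nonneg_nonneg) auto
  have "(\<integral>y. (1 - cos (b \<bullet> y)) * nu y \<partial>lborel) \<le> 0"
    using Re_Phi_le_Psi_inf[OF nu_nonneg nu_int, of b] assms(3)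
    by (simp add: Re_Phi_eq_integral[OF nu_nonneg nu_int])
  then have "(\<integral>y. (1 - cos (b \<bullet> y)) * nu y \<partial>lborel) = 0"
    using integral_nonneg_AE[OF nonneg] by linarith
  then have "AE y in lborel. (1 - cos (b \<bullet> y)) * nu y = 0"
    using integral_nonneg_eq_0_iff_AE[OF integrable_one_minus_cos_mult[OF nu_nonneg nu_int] nonneg]
    by simp
  then show ?thesis
    using AE_cos_inner_neq_1[OF \<open>b \<noteq> 0\<close>] by eventually_elim auto
qed

lemma power_le_const_mult_power:
  fixes b c \<psi> :: real
  assumes "b \<ge> 0" "c > 0" "\<psi> > 0"
  obtains C where "C > 0" "\<And>n. n \<ge> 1 \<Longrightarrow> b ^ n \<le> c * (C * \<psi>) ^ n"
proof
  define m where "m = max 1 (1 / c)"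
  have m: "m \<ge> 1" "c * m \<ge> 1"
    using assms(2) by (auto simp: m_def max_def field_simps)
  show "max b 1 * m / \<psi> > 0"
    using m assms(3) by simp
  fix n :: nat assume "n \<ge> 1"
  have "b ^ n \<le> max b 1 ^ n * (c * m)"
    using m assms(1) by (intro order.trans[OF power_mono mult_le_cancel_left1[THEN iffD2]]) auto
  also have "\<dots> \<le> max b 1 ^ n * (c * m ^ n)"
    using \<open>n \<ge> 1\<close> m assms(2) by (intro mult_left_mono) (auto intro: power_increasing[of 1 n, simplified])
  also have "\<dots> = c * (max b 1 * m / \<psi> * \<psi>) ^ n"
    using assms(3) by (simp add: power_mult_distrib)
  finally show "b ^ n \<le> c * (max b 1 * m / \<psi> * \<psi>) ^ n" .
qed

lemma borel_measurable_antimono_norm: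
  fixes f :: "real \<Rightarrow> real"
  assumes "\<And>r s. 0 < r \<Longrightarrow> r \<le> s \<Longrightarrow> f s \<le> f r"
  shows "(\<lambda>x::'a::euclidean_space. f (norm x)) \<in> borel_measurable borel"
proof -
  define g where "g t = - f (if t \<le> 0 then 0 else t)" for t
  have [measurable]: "g \<in> borel_measurable borel"
    by (rule borel_measurable_piecewise_mono[of "{{0<..}, {..0}}"])
      (auto simp: mono_on_def g_def intro: assms)
  have "(\<lambda>x::'a. - g (norm x)) \<in> borel_measurable borel"
    by measurable
  moreover have "(\<lambda>x::'a. - g (norm x)) = (\<lambda>x. f (norm x))"
    by (auto simp: g_def)
  ultimately show ?thesis by simp
qed

locale tilted_levy_density =
  fixes nu :: "'a::euclidean_space \<Rightarrow> real"
    and f :: "real \<Rightarrow> real"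
    and E :: "'a set"
    and C0 \<kappa> :: real
  assumes nu_nonneg: "\<And>x. nu x \<ge> 0"
    and nu_meas [measurable]: "nu \<in> borel_measurable lborel"
    and finite_nu: "(\<integral>\<^sup>+ y. ennreal (nu y) \<partial>lborel) < \<infinity>"
    and f_pos: "\<And>r. r > 0 \<Longrightarrow> f r > 0"
    and f_mono: "\<And>r s. 0 < r \<Longrightarrow> r \<le> s \<Longrightarrow> f s \<le> f r"
    and C0_pos: "C0 > 0"
    and nu_le: "\<And>x. x \<noteq> 0 \<Longrightarrow> nu x \<le> C0 * f (norm x)"
    and K_lim: "(K_fun TYPE('a) f \<longlongrightarrow> 0) at_top"
    and E_sphere: "E \<subseteq> sphere 0 1"
    and kappa_nonneg: "\<kappa> \<ge> 0"
    and nu_ratio: "\<And>\<theta> y. \<theta> \<in> E \<Longrightarrow>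
           ((\<lambda>r. nu (r *\<^sub>R \<theta> - y) / nu (r *\<^sub>R \<theta>)) \<longlongrightarrow> exp (\<kappa> * (\<theta> \<bullet> y))) at_top"
    and C1_pos: "Inf {nu x / f (norm x) | x. x \<in> Gamma_cone E} > 0"
begin

abbreviation C1 :: real where
  "C1 \<equiv> Inf {nu x / f (norm x) | x. x \<in> Gamma_cone E}"

lemma nu_integrable: "integrable lborel nu"
  using finite_nu nu_nonneg by (intro integrableI_bounded) auto

lemma nu_ray_lower:
  assumes "\<theta> \<in> E" "m > 0"
  shows "C1 * f m \<le> nu (m *\<^sub>R \<theta>)"
proof -
  let ?S = "{nu x / f (norm x) | x. x \<in> Gamma_cone E}"
  have norm_ray: "norm (m *\<^sub>R \<theta>) = m"
    using assms E_sphere by auto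
  then have "m *\<^sub>R \<theta> \<in> Gamma_cone E"
    using assms by (auto simp: Gamma_cone_def)
  then have "nu (m *\<^sub>R \<theta>) / f m \<in> ?S"
    using norm_ray by force
  moreover have "bdd_below ?S"
    using nu_nonneg f_pos
    by (intro bdd_belowI[of _ 0]) (force simp: Gamma_cone_def intro: divide_nonneg_pos)
  ultimately have "C1 \<le> nu (m *\<^sub>R \<theta>) / f m"
    by (rule cInf_lower)
  then show ?thesis
    using f_pos[OF assms(2)] by (simp add: pos_le_divide_eq)
qed

lemma nu_ray_pos:
  assumes "\<theta> \<in> E" "m > 0"
  shows "nu (m *\<^sub>R \<theta>) > 0"
  using nu_ray_lower[OF assms] C1_pos f_pos[OF assms(2)]
  by (meson mult_pos_pos order_less_le_trans)

lemma nn_integral_ratio_le_K_fun: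
  assumes "norm x > 1" "nu x > 0" "r > 0"
  shows "(\<integral>\<^sup>+ y. ennreal (nu (x - y) * nu y / nu x)
             * indicator {y. norm (x - y) > r \<and> norm y > r} y \<partial>lborel)
    \<le> ennreal (C0\<^sup>2 * f (norm x) / nu x) * K_fun TYPE('a) f r"
proof -
  let ?A = "{y. norm (x - y) > r \<and> norm y > r}"
  let ?g = "\<lambda>y. indicator ?A y * ennreal (f (norm (x - y)) * f (norm y))"
  have [measurable]: "(\<lambda>y::'a. f (norm y)) \<in> borel_measurable borel"
    by (rule borel_measurable_antimono_norm[OF f_mono])
  have fx: "f (norm x) > 0"
    using assms(1) by (intro f_pos) linarith
  have pointwise: "ennreal (nu (x - y) * nu y / nu x) * indicator ?A y
      \<le> ennreal (C0\<^sup>2 / nu x) * ?g y" for y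
  proof (cases "y \<in> ?A")
    case True
    then have "y \<noteq> 0" "x - y \<noteq> 0" "f (norm (x - y)) > 0" "f (norm y) > 0"
      using assms(3) by (auto intro!: f_pos)
    moreover have "nu (x - y) * nu y \<le> (C0 * f (norm (x - y))) * (C0 * f (norm y))"
      using calculation nu_le nu_nonneg C0_pos by (intro mult_mono) auto
    ultimately show ?thesis
      using True assms(2)
      by (auto simp: ennreal_mult[symmetric] power2_eq_square mult_ac intro!: ennreal_leI divide_right_mono)
  qed simp
  have "ennreal (1 / f (norm x)) * (\<integral>\<^sup>+ y. ?g y \<partial>lborel) \<le> K_fun TYPE('a) f r"
    unfolding K_fun_def using assms(1) by (intro SUP_upper2[of x]) auto
  then have g_le: "(\<integral>\<^sup>+ y. ?g y \<partial>lborel) \<le> ennreal (f (norm x)) * K_fun TYPE('a) f r"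
    using fx mult_left_mono[of _ _ "ennreal (f (norm x))"]
    by (fastforce simp: mult.assoc[symmetric] ennreal_mult[symmetric])
  have "(\<integral>\<^sup>+ y. ennreal (nu (x - y) * nu y / nu x) * indicator ?A y \<partial>lborel)
      \<le> ennreal (C0\<^sup>2 / nu x) * (\<integral>\<^sup>+ y. ?g y \<partial>lborel)"
    using pointwise by (subst nn_integral_cmult[symmetric]) (auto intro: nn_integral_mono)
  also have "\<dots> \<le> ennreal (C0\<^sup>2 / nu x) * (ennreal (f (norm x)) * K_fun TYPE('a) f r)"
    by (rule mult_left_mono[OF g_le]) simp
  also have "\<dots> = ennreal (C0\<^sup>2 * f (norm x) / nu x) * K_fun TYPE('a) f r"
    using fx assms(2) by (simp add: ennreal_mult'[symmetric] mult.assoc[symmetric])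
  finally show ?thesis .
qed

lemma nn_integral_ray_ratio_le:
  assumes "\<theta> \<in> E" "m > 1" "r > 0"
  shows "(\<integral>\<^sup>+ y. ennreal (nu (m *\<^sub>R \<theta> - y) * nu y / nu (m *\<^sub>R \<theta>))
             * indicator {y. norm (m *\<^sub>R \<theta> - y) > r \<and> norm y > r} y \<partial>lborel)
    \<le> ennreal (C0\<^sup>2 / C1) * K_fun TYPE('a) f r"
proof -
  have norm_ray: "norm (m *\<^sub>R \<theta>) = m"
    using assms E_sphere by auto
  have pos: "nu (m *\<^sub>R \<theta>) > 0" "f m > 0"
    using assms nu_ray_pos f_pos by auto
  have "C0\<^sup>2 * f m / nu (m *\<^sub>R \<theta>) \<le> C0\<^sup>2 / c" if "c > 0" "c * f m \<le> nu (m *\<^sub>R \<theta>)" for c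
    using that pos mult_right_mono[OF that(2), of "C0\<^sup>2"] by (simp add: divide_simps mult_ac)
  then have "C0\<^sup>2 * f m / nu (m *\<^sub>R \<theta>) \<le> C0\<^sup>2 / C1"
    using nu_ray_lower[OF assms(1)] assms(2) C1_pos by simp
  then have "ennreal (C0\<^sup>2 * f m / nu (m *\<^sub>R \<theta>)) * K_fun TYPE('a) f r
      \<le> ennreal (C0\<^sup>2 / C1) * K_fun TYPE('a) f r"
    by (intro mult_right_mono ennreal_leI) auto
  then show ?thesis
    using nn_integral_ratio_le_K_fun[of "m *\<^sub>R \<theta>" r] assms pos norm_ray by simp
qed

lemma tendsto_ray_ratio:
  assumes "\<theta> \<in> E"
  shows "(\<lambda>m. ennreal (nu (real m *\<^sub>R \<theta> - y) * nu y / nu (real m *\<^sub>R \<theta>))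
              * indicator {y. norm (real m *\<^sub>R \<theta> - y) > r \<and> norm y > r} y)
    \<longlonglongrightarrow> ennreal (exp (\<kappa> * (\<theta> \<bullet> y))) * ennreal (nu y) * indicator {y. norm y > r} y"
proof (cases "norm y > r")
  case True
  have "norm (real m *\<^sub>R \<theta> - y) > r" if "real m > r + norm y" for m
    using that norm_triangle_ineq2[of "real m *\<^sub>R \<theta>" y] assms E_sphere by auto
  then have "eventually (\<lambda>m. norm (real m *\<^sub>R \<theta> - y) > r) sequentially"
    by (rule eventually_mono[OF filterlim_real_sequentially[unfolded filterlim_at_top_dense,
          rule_format, of "r + norm y"]])
  then have "eventually (\<lambda>m.
        ennreal (nu (real m *\<^sub>R \<theta> - y) * nu y / nu (real m *\<^sub>R \<theta>))
          * indicator {y. norm (real m *\<^sub>R \<theta> - y) > r \<and> norm y > r} y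
      = ennreal (nu (real m *\<^sub>R \<theta> - y) / nu (real m *\<^sub>R \<theta>) * nu y)) sequentially"
    by (rule eventually_mono) (simp add: True)
  moreover have "(\<lambda>m. ennreal (nu (real m *\<^sub>R \<theta> - y) / nu (real m *\<^sub>R \<theta>) * nu y))
      \<longlonglongrightarrow> ennreal (exp (\<kappa> * (\<theta> \<bullet> y)) * nu y)"
    by (intro tendsto_ennrealI tendsto_mult_right
        filterlim_compose[OF nu_ratio[OF assms] filterlim_real_sequentially])
  ultimately show ?thesis
    using True nu_nonneg by (simp add: tendsto_cong ennreal_mult)
qed simp

lemma exp_tail_one_le:
  assumes "\<theta> \<in> E" "r > 0"
  shows "exp_tail nu \<kappa> \<theta> 1 r \<le> ennreal (C0\<^sup>2 / C1) * K_fun TYPE('a) f r"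
proof -
  define u where "u m y = ennreal (nu (real m *\<^sub>R \<theta> - y) * nu y / nu (real m *\<^sub>R \<theta>))
      * indicator {y. norm (real m *\<^sub>R \<theta> - y) > r \<and> norm y > r} y" for m y
  have "exp_tail nu \<kappa> \<theta> 1 r = (\<integral>\<^sup>+ y. liminf (\<lambda>m. u m y) \<partial>lborel)"
    unfolding exp_tail_def u_def
    by (simp add: lim_imp_Liminf[OF trivial_limit_sequentially tendsto_ray_ratio[OF assms(1)]])
  also have "\<dots> \<le> liminf (\<lambda>m. \<integral>\<^sup>+ y. u m y \<partial>lborel)"
    by (rule nn_integral_liminf) (simp add: u_def)
  also have "\<dots> \<le> ennreal (C0\<^sup>2 / C1) * K_fun TYPE('a) f r"
    unfolding u_def using assms
    by (intro Liminf_le eventually_sequentiallyI[of 2] nn_integral_ray_ratio_le) auto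
  finally show ?thesis .
qed

lemma exp_moment_one_le:
  assumes "\<theta> \<in> E" "r > 0"
  shows "exp_moment nu \<kappa> \<theta> 1 \<le> ennreal (exp (\<kappa> * r)) * (\<integral>\<^sup>+ y. ennreal (nu y) \<partial>lborel)
      + ennreal (C0\<^sup>2 / C1) * K_fun TYPE('a) f r"
proof -
  let ?e = "\<lambda>y. ennreal (exp (\<kappa> * (\<theta> \<bullet> y)))"
  have "?e y * ennreal (nu y)
      \<le> ennreal (exp (\<kappa> * r)) * ennreal (nu y) + ?e y * ennreal (nu y) * indicator {y. norm y > r} y"
    for y
  proof (cases "norm y > r")
    case False
    then have "\<theta> \<bullet> y \<le> r"
      using norm_cauchy_schwarz[of \<theta> y] assms(1) E_sphere by auto
    then have "?e y * ennreal (nu y) \<le> ennreal (exp (\<kappa> * r)) * ennreal (nu y)"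
      using kappa_nonneg by (intro mult_right_mono ennreal_leI) (auto simp: mult_left_mono)
    then show ?thesis
      by (simp add: add_increasing2)
  qed simp
  then have "exp_moment nu \<kappa> \<theta> 1
      \<le> (\<integral>\<^sup>+ y. ennreal (exp (\<kappa> * r)) * ennreal (nu y)
               + ?e y * ennreal (nu y) * indicator {y. norm y > r} y \<partial>lborel)"
    unfolding exp_moment_def by (intro nn_integral_mono) simp
  also have "\<dots> = ennreal (exp (\<kappa> * r)) * (\<integral>\<^sup>+ y. ennreal (nu y) \<partial>lborel) + exp_tail nu \<kappa> \<theta> 1 r"
    by (simp add: nn_integral_add nn_integral_cmult exp_tail_def)
  also have "\<dots> \<le> ennreal (exp (\<kappa> * r)) * (\<integral>\<^sup>+ y. ennreal (nu y) \<partial>lborel)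
      + ennreal (C0\<^sup>2 / C1) * K_fun TYPE('a) f r"
    by (intro add_left_mono exp_tail_one_le assms)
  finally show ?thesis .
qed

lemma exp_moment_one_bounded:
  obtains B where "B < \<infinity>" "\<And>\<theta>. \<theta> \<in> E \<Longrightarrow> exp_moment nu \<kappa> \<theta> 1 \<le> B"
proof -
  have "eventually (\<lambda>r. K_fun TYPE('a) f r < 1 \<and> r > 0) at_top"
    using order_tendstoD(2)[OF K_lim, of 1] eventually_gt_at_top[of 0]
    by (auto intro: eventually_conj)
  then obtain r where r: "K_fun TYPE('a) f r < 1" "r > 0"
    by (auto simp: eventually_at_top_linorder)
  let ?B = "ennreal (exp (\<kappa> * r)) * (\<integral>\<^sup>+ y. ennreal (nu y) \<partial>lborel) + ennreal (C0\<^sup>2 / C1)"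
  show thesis
  proof
    show "?B < \<infinity>"
      using finite_nu by (simp add: ennreal_mult_less_top)
    fix \<theta> assume "\<theta> \<in> E"
    have "ennreal (C0\<^sup>2 / C1) * K_fun TYPE('a) f r \<le> ennreal (C0\<^sup>2 / C1)"
      using r(1) mult_left_mono[of "K_fun TYPE('a) f r" 1 "ennreal (C0\<^sup>2 / C1)"] by simp
    then show "exp_moment nu \<kappa> \<theta> 1 \<le> ?B"
      using exp_moment_one_le[OF \<open>\<theta> \<in> E\<close> r(2)] by (auto intro: order_trans add_left_mono)
  qed
qed

theorem exp_moment_le_geometric:
  "\<exists>C17 > 0. \<forall>\<theta>\<in>E. \<forall>n\<ge>1.
     exp_moment nu \<kappa> \<theta> n \<le> ennreal ((C0 / C1) * (C17 * Psi_inf nu) ^ n)"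
proof (cases "Psi_inf nu > 0")
  case True
  obtain B where B: "B < \<infinity>" "\<And>\<theta>. \<theta> \<in> E \<Longrightarrow> exp_moment nu \<kappa> \<theta> 1 \<le> B"
    using exp_moment_one_bounded by blast
  obtain C where C: "C > 0" "\<And>n. n \<ge> 1 \<Longrightarrow> enn2real B ^ n \<le> (C0 / C1) * (C * Psi_inf nu) ^ n"
    using power_le_const_mult_power[of "enn2real B" "C0 / C1" "Psi_inf nu"] C0_pos C1_pos True
    by auto
  have "exp_moment nu \<kappa> \<theta> n \<le> ennreal ((C0 / C1) * (C * Psi_inf nu) ^ n)"
    if "\<theta> \<in> E" "n \<ge> 1" for \<theta> n
  proof -
    obtain k where n: "n = Suc k"
      using \<open>n \<ge> 1\<close> by (cases n) auto
    have "exp_moment nu \<kappa> \<theta> n \<le> B ^ n"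
      unfolding n exp_moment_conv_pow[OF nu_meas] by (intro power_mono B(2) that) simp
    also have "\<dots> = ennreal (enn2real B ^ n)"
      using B(1) by (simp add: ennreal_power[symmetric])
    also have "\<dots> \<le> ennreal ((C0 / C1) * (C * Psi_inf nu) ^ n)"
      by (intro ennreal_leI C(2) that)
    finally show ?thesis .
  qed
  then show ?thesis
    using C(1) by blast
next
  case False
  then have "AE y in lborel. nu y = 0"
    using AE_eq_0_if_Psi_inf_nonpos[OF nu_nonneg nu_integrable] by simp
  then have "exp_moment nu \<kappa> \<theta> 1 = 0" for \<theta>
    unfolding exp_moment_def by (subst nn_integral_0_iff_AE) (auto elim: eventually_mono)
  then have "exp_moment nu \<kappa> \<theta> n = 0" if "n \<ge> 1" for \<theta> n
    using that exp_moment_conv_pow[OF nu_meas, of \<kappa> \<theta> "n - 1"] by simp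
  then show ?thesis
    by (intro exI[of _ 1]) simp
qed

lemma exp_tail_one_tendsto_0: "((\<lambda>R. SUP \<theta>\<in>E. exp_tail nu \<kappa> \<theta> 1 R) \<longlongrightarrow> 0) at_top"
proof (rule tendsto_sandwich[OF _ _ tendsto_const])
  show "eventually (\<lambda>R. (SUP \<theta>\<in>E. exp_tail nu \<kappa> \<theta> 1 R) \<le> ennreal (C0\<^sup>2 / C1) * K_fun TYPE('a) f R) at_top"
    using eventually_gt_at_top[of 0] by eventually_elim (blast intro: SUP_least exp_tail_one_le)
  show "((\<lambda>R. ennreal (C0\<^sup>2 / C1) * K_fun TYPE('a) f R) \<longlongrightarrow> 0) at_top"
    using ennreal_tendsto_cmult[OF _ K_lim] by simp
qed simp

theorem exp_tail_tendsto_0: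
  assumes "n \<ge> 1"
  shows "((\<lambda>R. SUP \<theta>\<in>E. exp_tail nu \<kappa> \<theta> n R) \<longlongrightarrow> 0) at_top"
proof -
  obtain B where B: "B < \<infinity>" "\<And>\<theta>. \<theta> \<in> E \<Longrightarrow> exp_moment nu \<kappa> \<theta> 1 \<le> B"
    using exp_moment_one_bounded by blast
  let ?S = "\<lambda>k R. SUP \<theta>\<in>E. exp_tail nu \<kappa> \<theta> k R"
  have half: "filterlim (\<lambda>R::real. R / 2) at_top at_top"
    unfolding filterlim_at_top
  proof
    show "eventually (\<lambda>R. Z \<le> R / 2) at_top" for Z :: real
      using eventually_ge_at_top[of "2 * Z"] by eventually_elim simp
  qed
  have "(?S (Suc k) \<longlongrightarrow> 0) at_top" for k
  proof (induction k)
    case (Suc k)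
    have bound: "?S (Suc (Suc k)) R \<le> B ^ Suc k * ?S 1 (R/2) + B * ?S (Suc k) (R/2)" for R
    proof (rule SUP_least)
      fix \<theta> assume "\<theta> \<in> E"
      have "exp_moment nu \<kappa> \<theta> (Suc k) \<le> B ^ Suc k"
        unfolding exp_moment_conv_pow[OF nu_meas] by (intro power_mono B(2) \<open>\<theta> \<in> E\<close>) simp
      then show "exp_tail nu \<kappa> \<theta> (Suc (Suc k)) R \<le> B ^ Suc k * ?S 1 (R/2) + B * ?S (Suc k) (R/2)"
        using \<open>\<theta> \<in> E\<close> B(2)
        by (intro order.trans[OF exp_tail_Suc_Suc_le[OF nu_meas]] add_mono mult_mono SUP_upper) auto
    qed
    have lim: "((\<lambda>R. B ^ Suc k * ?S 1 (R/2) + B * ?S (Suc k) (R/2))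
        \<longlongrightarrow> B ^ Suc k * 0 + B * 0) at_top"
      using B(1) exp_tail_one_tendsto_0 Suc.IH
      by (intro tendsto_add ennreal_tendsto_cmult filterlim_compose[OF _ half])
        (auto simp: power_less_top_ennreal ennreal_mult_less_top)
    show ?case
    proof (rule tendsto_sandwich[OF _ _ tendsto_const])
      show "eventually (\<lambda>R. ?S (Suc (Suc k)) R \<le> B ^ Suc k * ?S 1 (R/2) + B * ?S (Suc k) (R/2)) at_top"
        using bound by simp
      show "((\<lambda>R. B ^ Suc k * ?S 1 (R/2) + B * ?S (Suc k) (R/2)) \<longlongrightarrow> 0) at_top"
        using lim by simp
    qed simp
  qed (use exp_tail_one_tendsto_0 in simp)
  then show ?thesis
    using assms by (cases n) auto
qed

end

theorem corollary4:
  fixes nu :: "'a::euclidean_space \<Rightarrow> real"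
    and f :: "real \<Rightarrow> real"
    and E :: "'a set"
    and C0 \<kappa> :: real
  assumes nu_nonneg: "\<And>x. nu x \<ge> 0"
    and nu_meas: "nu \<in> borel_measurable lborel"
    and levy: "(\<integral>\<^sup>+ y. ennreal (min 1 (norm y ^ 2) * nu y) \<partial>lborel) < \<infinity>"
    and finite_nu: "(\<integral>\<^sup>+ y. ennreal (nu y) \<partial>lborel) < \<infinity>"
    \<comment> \<open>condition (B)\<close>
    and f_pos: "\<And>r. r > 0 \<Longrightarrow> f r > 0"
    and f_mono: "\<And>r s. 0 < r \<Longrightarrow> r \<le> s \<Longrightarrow> f s \<le> f r"
    and C0_pos: "C0 > 0"
    and nu_le: "\<And>x. x \<noteq> 0 \<Longrightarrow> nu x \<le> C0 * f (norm x)"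
    and liminf_pos: "Liminf (at_right 0) (\<lambda>r.
           enn2ereal (\<integral>\<^sup>+ x\<in>{x. norm x > r}. ennreal (nu x) \<partial>lborel)
           / ereal (f r * r ^ DIM('a))) > 0"
    and K_mono: "\<And>r s. 0 < r \<Longrightarrow> r \<le> s \<Longrightarrow> K_fun TYPE('a) f s \<le> K_fun TYPE('a) f r"
    and K_lim: "(K_fun TYPE('a) f \<longlongrightarrow> 0) at_top"
    \<comment> \<open>condition (C)\<close>
    and E_sphere: "E \<subseteq> sphere 0 1"
    and kappa_nonneg: "\<kappa> \<ge> 0"
    and nu_ratio: "\<And>\<theta> y. \<theta> \<in> E \<Longrightarrow>
           ((\<lambda>r. nu (r *\<^sub>R \<theta> - y) / nu (r *\<^sub>R \<theta>)) \<longlongrightarrow> exp (\<kappa> * (\<theta> \<bullet> y))) at_top"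
    and C1_pos: "Inf {nu x / f (norm x) | x. x \<in> Gamma_cone E} > 0"
  shows "\<exists>C17 > 0.
           (\<forall>\<theta>\<in>E. \<forall>n\<ge>1.
              (\<integral>\<^sup>+ z. ennreal (exp (\<kappa> * (\<theta> \<bullet> z))) * conv_pow nu n z \<partial>lborel)
              \<le> ennreal ((C0 / Inf {nu x / f (norm x) | x. x \<in> Gamma_cone E})
                         * (C17 * Psi_inf nu) ^ n))
         \<and> (\<forall>n\<ge>1. ((\<lambda>R. SUP \<theta>\<in>E.
              \<integral>\<^sup>+ z\<in>{z. norm z > R}. ennreal (exp (\<kappa> * (\<theta> \<bullet> z))) * conv_pow nu n z \<partial>lborel)
              \<longlongrightarrow> 0) at_top)"
proof -
  interpret tilted_levy_density nu f E C0 \<kappa>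
    by unfold_locales (fact assms)+
  show ?thesis
    using exp_moment_le_geometric exp_tail_tendsto_0
    unfolding exp_moment_def exp_tail_def by blast
qed

end
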